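(* Let $f(x,y) = \frac{xy}{x+y+1}$ for $x,y\ge0$. Let $a,b$ be nonnegative random variables, $\rho>0$ and $r\in\mathbb R$. Then $$\Pr\bigl(f(\rho a,\rho b)\le\rho^{2r}\bigr) \le \Pr\Bigl(\min(a,b)\le \rho^{2r-1}+\rho^{r-1}\sqrt{1+\rho^{2r}}\Bigr).$$ *)

theory Defs
  imports "HOL-Probability.Probability"
begin

definition fxy :: "real \<Rightarrow> real \<Rightarrow> real" where
  "fxy x y = x * y / (x + y + 1)"

end

theory Submission imports Defs begin

text \<open>Write \<open>s = \<rho> powr (2r)\<close>. Since \<open>f\<close> is monotone in each argument,
  \<open>f(\<rho>a, \<rho>b) \<ge> f(w, w) = w\<^sup>2 / (2w + 1)\<close> for \<open>w = \<rho> min(a, b)\<close>, and \<open>w\<^sup>2 / (2w + 1) > s\<close>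
  as soon as \<open>w\<close> exceeds the positive root \<open>s + sqrt (s\<^sup>2 + s)\<close> of \<open>w\<^sup>2 - 2sw - s\<close>.
  Dividing this root by \<open>\<rho>\<close> gives the threshold of the theorem.\<close>

lemma fxy_commute: "fxy x y = fxy y x"
  unfolding fxy_def by (simp add: ac_simps)

lemma fxy_mono_left:
  assumes "0 \<le> u" "u \<le> x" "0 \<le> y"
  shows "fxy u y \<le> fxy x y"
proof -
  have "x * y * (u + y + 1) - u * y * (x + y + 1) = y * (y + 1) * (x - u)"
    by (simp add: algebra_simps)
  also have "\<dots> \<ge> 0"
    using assms by simp
  finally show ?thesis
    unfolding fxy_def using assms by (simp add: divide_simps)
qed

lemma fxy_mono:
  assumes "0 \<le> u" "u \<le> x" "0 \<le> v" "v \<le> y"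
  shows "fxy u v \<le> fxy x y"
proof -
  have "fxy u v \<le> fxy x v"
    using assms by (intro fxy_mono_left) auto
  also have "\<dots> = fxy v x"
    by (rule fxy_commute)
  also have "\<dots> \<le> fxy y x"
    using assms by (intro fxy_mono_left) auto
  finally show ?thesis
    by (simp add: fxy_commute)
qed

lemma fxy_diag_gt:
  assumes "0 \<le> s" and u: "s + sqrt (s\<^sup>2 + s) < u"
  shows "s < fxy u u"
proof -
  define w where "w = s + sqrt (s\<^sup>2 + s)"
  have "0 \<le> sqrt (s\<^sup>2 + s)"
    using \<open>0 \<le> s\<close> by simp
  then have "s \<le> w" "0 < u"
    using u \<open>0 \<le> s\<close> unfolding w_def by linarith+
  have root: "w\<^sup>2 - 2 * s * w - s = 0"
    using \<open>0 \<le> s\<close> unfolding w_def by (simp add: power2_eq_square algebra_simps)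
  have "u\<^sup>2 - 2 * s * u - s = (u - w) * (u + w - 2 * s) + (w\<^sup>2 - 2 * s * w - s)"
    by (simp add: power2_eq_square algebra_simps)
  also have "\<dots> > 0"
    using u \<open>s \<le> w\<close> unfolding root w_def[symmetric] by simp
  finally have "s * (2 * u + 1) < u * u"
    by (simp add: power2_eq_square algebra_simps)
  with \<open>0 < u\<close> show ?thesis
    unfolding fxy_def by (simp add: pos_less_divide_eq)
qed

lemma fxy_le_imp_min_le:
  assumes "0 \<le> x" "0 \<le> y" "0 \<le> s" "fxy x y \<le> s"
  shows "min x y \<le> s + sqrt (s\<^sup>2 + s)"
proof (rule ccontr)
  assume "\<not> ?thesis"
  then have "s < fxy (min x y) (min x y)"
    using \<open>0 \<le> s\<close> by (intro fxy_diag_gt) auto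
  also have "\<dots> \<le> fxy x y"
    using assms by (intro fxy_mono) auto
  finally show False
    using \<open>fxy x y \<le> s\<close> by simp
qed

lemma powr_root_threshold:
  fixes \<rho> r :: real
  assumes "0 < \<rho>"
  defines "s \<equiv> \<rho> powr (2 * r)"
  shows "(s + sqrt (s\<^sup>2 + s)) / \<rho>
    = \<rho> powr (2 * r - 1) + \<rho> powr (r - 1) * sqrt (1 + \<rho> powr (2 * r))"
proof -
  have "s = (\<rho> powr r)\<^sup>2"
    unfolding s_def using assms by (simp add: powr_realpow[symmetric] powr_powr mult.commute)
  then have "s\<^sup>2 + s = (\<rho> powr r)\<^sup>2 * (1 + s)"
    by (simp add: power2_eq_square algebra_simps)
  then have "sqrt (s\<^sup>2 + s) = \<rho> powr r * sqrt (1 + s)"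
    by (simp add: real_sqrt_mult)
  then show ?thesis
    using assms unfolding s_def by (simp add: powr_diff add_divide_distrib)
qed

lemma fxy_scaled_le_powr_imp_min_le:
  fixes a b \<rho> r :: real
  assumes "0 \<le> a" "0 \<le> b" "0 < \<rho>" "fxy (\<rho> * a) (\<rho> * b) \<le> \<rho> powr (2 * r)"
  shows "min a b \<le> \<rho> powr (2 * r - 1) + \<rho> powr (r - 1) * sqrt (1 + \<rho> powr (2 * r))"
proof -
  let ?s = "\<rho> powr (2 * r)"
  have "\<rho> * min a b = min (\<rho> * a) (\<rho> * b)"
    using \<open>0 < \<rho>\<close> by (simp add: min_mult_distrib_left)
  also have "\<dots> \<le> ?s + sqrt (?s\<^sup>2 + ?s)"
    using assms by (intro fxy_le_imp_min_le) auto
  finally have "min a b \<le> (?s + sqrt (?s\<^sup>2 + ?s)) / \<rho>"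
    using \<open>0 < \<rho>\<close> by (simp add: pos_le_divide_eq mult.commute)
  then show ?thesis
    using \<open>0 < \<rho>\<close> by (simp only: powr_root_threshold)
qed

theorem lemma4:
  fixes M :: "'s measure" and a b :: "'s \<Rightarrow> real" and \<rho> r :: real
  assumes "prob_space M"
    and "a \<in> borel_measurable M" and "b \<in> borel_measurable M"
    and "\<And>\<omega>. \<omega> \<in> space M \<Longrightarrow> a \<omega> \<ge> 0"
    and "\<And>\<omega>. \<omega> \<in> space M \<Longrightarrow> b \<omega> \<ge> 0"
    and "\<rho> > 0"
  shows "measure M {\<omega> \<in> space M. fxy (\<rho> * a \<omega>) (\<rho> * b \<omega>) \<le> \<rho> powr (2 * r)}
       \<le> measure M {\<omega> \<in> space M. min (a \<omega>) (b \<omega>)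
             \<le> \<rho> powr (2 * r - 1) + \<rho> powr (r - 1) * sqrt (1 + \<rho> powr (2 * r))}"
proof -
  interpret prob_space M by fact
  have "{\<omega> \<in> space M. min (a \<omega>) (b \<omega>)
          \<le> \<rho> powr (2 * r - 1) + \<rho> powr (r - 1) * sqrt (1 + \<rho> powr (2 * r))} \<in> sets M"
    using assms(2,3) by measurable
  then show ?thesis
    by (rule finite_measure_mono[rotated]) (use fxy_scaled_le_powr_imp_min_le assms in auto)
qed

end
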